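(* Let $G$ be a discrete group, $\mathfrak g$ a finite string of elements of $G$, $\mathcal E$ a finite partition of $G$, $\ell=|Con(\mathfrak g,\mathcal E)|$, and let $(B-A)X=0$ be a subsystem of $Eq(\mathfrak g,\mathcal E)$ consisting of $p$ equations $A_tX=B_tX$ ($A,B$ the $p\times\ell$ $(0,1)$-matrices with rows $A_t,B_t$). Suppose that $\sum_{t=1}^p(B_t-A_t)=(1,1,\dots,1)$ and that there is a $p\times p$ permutation matrix $P$, corresponding to a permutation $\pi$ of $\{1,\dots,p\}$ (so that row $i$ of $PM$ is row $\pi(i)$ of $M$), such that the first $p-1$ rows of $PB-P^+A$ have nonnegative entries. Then $\tau(G)\le 1+|A_{\pi(1)}|+\ell$, where $|A_{\pi(1)}|$ denotes the number of entries equal to $1$ in the row $A_{\pi(1)}$.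
   Context: Configurations: for $\mathfrak g=(g_1,\dots,g_n)$ and a partition $\mathcal E=\{E_1,\dots,E_m\}$ of $G$, a configuration is $C=(c_0,\dots,c_n)\in\{1,\dots,m\}^{n+1}$ such that some $x\in G$ has $x\in E_{c_0}$ and $g_ix\in E_{c_i}$ ($1\le i\le n$); $Con(\mathfrak g,\mathcal E)=\{C_1,\dots,C_\ell\}$ is the set of configurations. The configuration equations $Eq(\mathfrak g,\mathcal E)$: variables $f_C$, equations $\sum_{C:\,c_j=i}f_C=\sum_{C:\,c_k=i}f_C$ for $1\le i\le m$, $0\le j,k\le n$, each written $aX=bX$ with $X=(f_{C_1},\dots,f_{C_\ell})^t$ and $a,b\in\{0,1\}^\ell$ the indicator vectors of the configurations on each side. A subsystem is a finite list (repetitions allowed, sides may be interchanged) of such equations. For a permutation matrix $P$ with rows $P_1,\dots,P_p$, $P^+$ denotes the matrix with rows $P_2,\dots,P_p,P_1$. Tarski number: a complete paradoxical decomposition of $G$ is a partition $\{A_1,\dots,A_r,B_1,\dots,B_s\}$ of $G$ with elements $a_i,b_j\in G$ such that $\{a_iA_i\}$ and $\{b_jB_j\}$ are each partitions of $G$; $\tau(G)$ is the minimum of $r+s$ over all such ($\infty$ if none). *)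

theory Defs
  imports "HOL-Algebra.Group" "HOL-Library.Extended_Nat"
begin

definition is_partition_list :: "('a, 'b) monoid_scheme \<Rightarrow> 'a set list \<Rightarrow> bool" where
  "is_partition_list G Es \<longleftrightarrow>
     (\<forall>i < length Es. Es ! i \<noteq> {} \<and> Es ! i \<subseteq> carrier G) \<and>
     (\<forall>i < length Es. \<forall>j < length Es. i \<noteq> j \<longrightarrow> Es ! i \<inter> Es ! j = {}) \<and>
     (\<Union>i < length Es. Es ! i) = carrier G"

definition ltrans :: "('a, 'b) monoid_scheme \<Rightarrow> 'a \<Rightarrow> 'a set \<Rightarrow> 'a set" where
  "ltrans G a X = (\<lambda>x. a \<otimes>\<^bsub>G\<^esub> x) ` X"

definition complete_paradoxical_decomposition ::
  "('a, 'b) monoid_scheme \<Rightarrow> 'a set list \<Rightarrow> 'a list \<Rightarrow> 'a set list \<Rightarrow> 'a list \<Rightarrow> bool" where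
  "complete_paradoxical_decomposition G As as Bs bs \<longleftrightarrow>
     length as = length As \<and> length bs = length Bs \<and>
     set as \<subseteq> carrier G \<and> set bs \<subseteq> carrier G \<and>
     is_partition_list G (As @ Bs) \<and>
     is_partition_list G (map (\<lambda>i. ltrans G (as ! i) (As ! i)) [0..<length As]) \<and>
     is_partition_list G (map (\<lambda>j. ltrans G (bs ! j) (Bs ! j)) [0..<length Bs])"

definition tarski_number :: "('a, 'b) monoid_scheme \<Rightarrow> enat" where
  "tarski_number G = Inf {enat (length As + length Bs) | As as Bs bs.
      complete_paradoxical_decomposition G As as Bs bs}"

text \<open>Configurations of the string gs = (g_1,...,g_n) w.r.t. the partition
  Es = (E_0,...,E_{m-1}) (indices shifted to start at 0): lists C = (c_0,...,c_n).\<close>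
definition configurations :: "('a, 'b) monoid_scheme \<Rightarrow> 'a list \<Rightarrow> 'a set list \<Rightarrow> nat list set" where
  "configurations G gs Es = {C. length C = length gs + 1 \<and> (\<forall>i < length C. C ! i < length Es) \<and>
      (\<exists>x \<in> carrier G. x \<in> Es ! (C ! 0) \<and>
         (\<forall>i < length gs. (gs ! i) \<otimes>\<^bsub>G\<^esub> x \<in> Es ! (C ! (i + 1))))}"

text \<open>The configuration equations: an equation a X = b X is represented by the pair of
  the supports of the indicator vectors a and b (subsets of the set of configurations).
  The equation for i, j, k is  sum over C with c_j = i of f_C  =  sum over C with c_k = i of f_C.\<close>
definition config_equations :: "('a, 'b) monoid_scheme \<Rightarrow> 'a list \<Rightarrow> 'a set list \<Rightarrow>
    (nat list set \<times> nat list set) set" where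
  "config_equations G gs Es = {({C \<in> configurations G gs Es. C ! j = i},
                                 {C \<in> configurations G gs Es. C ! k = i}) | i j k.
      i < length Es \<and> j \<le> length gs \<and> k \<le> length gs}"

definition ind :: "nat list set \<Rightarrow> nat list \<Rightarrow> int" where
  "ind S C = (if C \<in> S then 1 else 0)"

end

theory Submission
  imports Defs "HOL-Library.Disjoint_Sets"
begin

text \<open>
  Each configuration equation \<open>A t X = B t X\<close> is realised by a left translation: if it
  compares the coordinates \<open>j\<close> and \<open>k\<close> of configurations, then \<open>h = inv g\<^sub>k \<otimes> g\<^sub>j\<close> maps
  the points whose configuration lies in \<open>A t\<close> bijectively onto those whose configuration lies
  in \<open>B t\<close>. The nonnegativity hypothesis says \<open>A (\<pi> (s + 1)) \<subseteq> B (\<pi> s)\<close>, so these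
  translations can be chained: a point of \<open>W\<close> (configuration in \<open>A (\<pi> 0)\<close>) is pushed along
  the chain until it first leaves \<open>A (\<pi> (s + 1))\<close>. This cuts \<open>W\<close> into pieces that are carried
  onto fibres of the configuration map, and the hypothesis \<open>\<Sum>t. B t - A t = 1\<close> telescopes to
  say that every fibre is hit exactly once, or twice if it lies in \<open>W\<close>. One copy of every
  fibre gives \<open>card Con\<close> pieces whose translates partition \<open>G\<close>; the second copies, together
  with the complement of \<open>W\<close>, give \<open>card (A (\<pi> 0)) + 1\<close> pieces whose translates partition
  \<open>G\<close> again.
\<close>

definition indexed_partition :: "('i \<Rightarrow> 'a set) \<Rightarrow> 'i set \<Rightarrow> 'a set \<Rightarrow> bool" where
  "indexed_partition F I S \<longleftrightarrow>
     (\<forall>i\<in>I. F i \<noteq> {}) \<and> disjoint_family_on F I \<and> (\<Union>i\<in>I. F i) = S"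

lemma indexed_partition_reindex:
  assumes "indexed_partition F I S" "bij_betw g J I"
  shows "indexed_partition (F \<circ> g) J S"
  using assms unfolding indexed_partition_def disjoint_family_on_def bij_betw_def inj_on_def
  by (auto simp: image_comp[symmetric]) blast

lemma indexed_partition_cong:
  "(\<And>i. i \<in> I \<Longrightarrow> F i = F' i) \<Longrightarrow> indexed_partition F I S \<longleftrightarrow> indexed_partition F' I S"
  unfolding indexed_partition_def disjoint_family_on_def by simp

lemma indexed_partition_fibres: "indexed_partition (\<lambda>c. {x \<in> T. f x = c}) (f ` T) T"
  unfolding indexed_partition_def disjoint_family_on_def by blast

lemma indexed_partition_Plus:
  assumes "indexed_partition F I S" "indexed_partition F' I' S'" "S \<inter> S' = {}"
  shows "indexed_partition (case_sum F F') (I <+> I') (S \<union> S')"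
proof -
  have "disjoint_family_on (case_sum F F') (I <+> I')"
  proof (unfold disjoint_family_on_def, intro ballI impI)
    fix k l assume "k \<in> I <+> I'" "l \<in> I <+> I'" "k \<noteq> l"
    then show "case_sum F F' k \<inter> case_sum F F' l = {}"
      using assms unfolding indexed_partition_def
      by (elim PlusE) (auto dest: disjoint_family_onD)
  qed
  then show ?thesis
    using assms unfolding indexed_partition_def by (auto simp: Plus_def)
qed

lemma indexed_partition_PlusD:
  assumes "indexed_partition (case_sum F F') (I <+> I') S"
  shows "indexed_partition F I (\<Union>(F ` I))" "indexed_partition F' I' (\<Union>(F' ` I'))"
    and "\<Union>(F ` I) \<inter> \<Union>(F' ` I') = {}" "\<Union>(F ` I) \<union> \<Union>(F' ` I') = S"
proof -
  have ne: "\<And>k. k \<in> I <+> I' \<Longrightarrow> case_sum F F' k \<noteq> {}"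
    and dj: "\<And>k l. k \<in> I <+> I' \<Longrightarrow> l \<in> I <+> I' \<Longrightarrow> k \<noteq> l \<Longrightarrow>
      case_sum F F' k \<inter> case_sum F F' l = {}"
    and un: "(\<Union>k\<in>I <+> I'. case_sum F F' k) = S"
    using assms unfolding indexed_partition_def disjoint_family_on_def by auto
  show "indexed_partition F I (\<Union>(F ` I))"
    using ne[OF InlI] dj[OF InlI InlI] by (auto simp: indexed_partition_def disjoint_family_on_def)
  show "indexed_partition F' I' (\<Union>(F' ` I'))"
    using ne[OF InrI] dj[OF InrI InrI] by (auto simp: indexed_partition_def disjoint_family_on_def)
  show "\<Union>(F ` I) \<inter> \<Union>(F' ` I') = {}"
    using dj[OF InlI InrI] by auto
  show "\<Union>(F ` I) \<union> \<Union>(F' ` I') = S"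
    using un by (auto simp: Plus_def)
qed

lemma indexed_partition_singleton: "S \<noteq> {} \<Longrightarrow> indexed_partition (\<lambda>_. S) {i} S"
  unfolding indexed_partition_def disjoint_family_on_def by blast

lemma is_partition_list_map:
  assumes "distinct xs" "indexed_partition F (set xs) (carrier G)"
  shows "is_partition_list G (map F xs)"
proof -
  have "(\<Union>i<length xs. F (xs ! i)) = (\<Union>x\<in>set xs. F x)"
    by (auto simp: set_conv_nth)
  then show ?thesis
    using assms unfolding is_partition_list_def indexed_partition_def disjoint_family_on_def
    by (auto simp: nth_eq_iff_index_eq)
qed

lemma tarski_number_le_indexed:
  fixes I :: "'i set" and J :: "'j set"
  assumes "finite I" "finite J" "a ` I \<subseteq> carrier G" "b ` J \<subseteq> carrier G"
    and "indexed_partition (case_sum Q R) (I <+> J) (carrier G)"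
    and "indexed_partition (\<lambda>i. ltrans G (a i) (Q i)) I (carrier G)"
    and "indexed_partition (\<lambda>j. ltrans G (b j) (R j)) J (carrier G)"
  shows "tarski_number G \<le> enat (card I + card J)"
proof -
  obtain xs ys where xs: "distinct xs" "set xs = I" and ys: "distinct ys" "set ys = J"
    using assms(1,2) finite_distinct_list by metis
  have translates: "map (\<lambda>i. ltrans G (map a zs ! i) (map F zs ! i)) [0..<length (map F zs)]
      = map (\<lambda>z. ltrans G (a z) (F z)) zs" for a F and zs :: "'c list"
    by (rule nth_equalityI) auto
  have "distinct (map Inl xs @ map Inr ys)" "set (map Inl xs @ map Inr ys) = I <+> J"
    using xs ys by (auto simp: distinct_map Plus_def)
  then have "is_partition_list G (map (case_sum Q R) (map Inl xs @ map Inr ys))"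
    using assms(5) by (metis is_partition_list_map)
  then have "complete_paradoxical_decomposition G (map Q xs) (map a xs) (map R ys) (map b ys)"
    unfolding complete_paradoxical_decomposition_def translates
    using assms(3,4,6,7) xs ys by (auto simp: comp_def intro!: is_partition_list_map)
  then have "tarski_number G \<le> enat (length (map Q xs) + length (map R ys))"
    unfolding tarski_number_def by (intro Inf_lower) blast
  then show ?thesis
    using xs ys by (simp add: distinct_card[symmetric])
qed

lemma (in monoid) tarski_number_le_doubling:
  assumes "finite I" "finite J" "a ` I \<subseteq> carrier G" "b ` J \<subseteq> carrier G" "W \<subseteq> carrier G"
    and "indexed_partition (case_sum Q R) (I <+> J) W"
    and "indexed_partition (\<lambda>i. ltrans G (a i) (Q i)) I (carrier G)"
    and "indexed_partition (\<lambda>j. ltrans G (b j) (R j)) J W"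
  shows "tarski_number G \<le> enat (card I + card J + 1)"
proof (cases "W = carrier G")
  case True
  then have "tarski_number G \<le> enat (card I + card J)"
    using assms by (intro tarski_number_le_indexed) auto
  then show ?thesis
    by (simp add: order_trans)
next
  case False
  define Wc where "Wc = carrier G - W"
  have "Wc \<noteq> {}"
    using False assms(5) unfolding Wc_def by blast
  then have Wc: "indexed_partition (\<lambda>_. Wc) {()} Wc"
    by (rule indexed_partition_singleton)
  have "ltrans G \<one> Wc = Wc"
    unfolding ltrans_def Wc_def by (auto simp: image_def)
  then have "(\<lambda>j. ltrans G (case_sum b (\<lambda>_. \<one>) j) (case_sum R (\<lambda>_. Wc) j))
      = case_sum (\<lambda>j. ltrans G (b j) (R j)) (\<lambda>_. Wc)"
    by (intro ext) (simp split: sum.split)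
  moreover have "W \<inter> Wc = {}" "W \<union> Wc = carrier G"
    using assms(5) unfolding Wc_def by blast+
  ultimately have translates: "indexed_partition
      (\<lambda>j. ltrans G (case_sum b (\<lambda>_. \<one>) j) (case_sum R (\<lambda>_. Wc) j)) (J <+> {()}) (carrier G)"
    using indexed_partition_Plus[OF assms(8) Wc] by metis
  have "indexed_partition (case_sum Q (case_sum R (\<lambda>_. Wc))) (I <+> (J <+> {()}))
      (\<Union>(Q ` I) \<union> (\<Union>(R ` J) \<union> Wc))"
    using indexed_partition_PlusD[OF assms(6)]
    by (intro indexed_partition_Plus Wc) (auto simp: Wc_def)
  moreover have "\<Union>(Q ` I) \<union> (\<Union>(R ` J) \<union> Wc) = carrier G"
    using indexed_partition_PlusD(4)[OF assms(6)] assms(5) unfolding Wc_def by blast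
  moreover have "case_sum b (\<lambda>_. \<one>) ` (J <+> {()}) \<subseteq> carrier G"
    using assms(4) by auto
  ultimately have "tarski_number G \<le> enat (card I + card (J <+> {()}))"
    using assms(2) by (intro tarski_number_le_indexed[OF assms(1) _ assms(3) _ _ assms(7) translates]) auto
  then show ?thesis
    using assms(2) by (simp add: card_Plus)
qed

lemma bij_betw_Min_Max:
  assumes "J \<subseteq> I" and card_S: "\<forall>i\<in>I. card (S i) = (if i \<in> J then 2 else 1)"
  shows "bij_betw (case_sum (\<lambda>i. (i, Min (S i))) (\<lambda>i. (i, Max (S i)))) (I <+> J) (SIGMA i:I. S i)"
proof -
  have single: "S i = {Min (S i)}" if i: "i \<in> I" "i \<notin> J" for i
  proof -
    have "card (S i) = 1"
      using card_S i by simp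
    then obtain s where "S i = {s}"
      by (rule card_1_singletonE)
    then show ?thesis by simp
  qed
  have double: "S i = {Min (S i), Max (S i)} \<and> Min (S i) \<noteq> Max (S i)" if i: "i \<in> J" for i
  proof -
    have "card (S i) = 2"
      using card_S i assms(1) by auto
    then obtain s t where "S i = {s, t}" "s \<noteq> t"
      by (auto simp: card_2_iff)
    then show ?thesis by (auto simp: min_def max_def)
  qed
  have Min_mem: "Min (S i) \<in> S i" if "i \<in> I" for i
    using single double that by (cases "i \<in> J") blast+
  have Max_mem: "Max (S i) \<in> S i" if "i \<in> J" for i
    using double that by blast
  show ?thesis
  proof (rule bij_betwI')
    fix k l assume "k \<in> I <+> J" "l \<in> I <+> J"
    then show "(case_sum (\<lambda>i. (i, Min (S i))) (\<lambda>i. (i, Max (S i))) k =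
        case_sum (\<lambda>i. (i, Min (S i))) (\<lambda>i. (i, Max (S i))) l) = (k = l)"
      by (elim PlusE) (auto dest: double)
  next
    fix k assume "k \<in> I <+> J"
    then show "case_sum (\<lambda>i. (i, Min (S i))) (\<lambda>i. (i, Max (S i))) k \<in> (SIGMA i:I. S i)"
      using Min_mem Max_mem assms(1) by (elim PlusE) auto
  next
    fix z assume "z \<in> (SIGMA i:I. S i)"
    then obtain i s where z: "z = (i, s)" "i \<in> I" "s \<in> S i"
      by blast
    then have "s = Min (S i) \<or> i \<in> J \<and> s = Max (S i)"
      using single double by (cases "i \<in> J") blast+
    then show "\<exists>k\<in>I <+> J. z = case_sum (\<lambda>i. (i, Min (S i))) (\<lambda>i. (i, Max (S i))) k"
    proof
      assume "s = Min (S i)"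
      then show ?thesis
        using z by (intro bexI[of _ "Inl i"]) auto
    next
      assume "i \<in> J \<and> s = Max (S i)"
      then show ?thesis
        using z by (intro bexI[of _ "Inr i"]) auto
    qed
  qed
qed

context monoid
begin

lemma ltrans_stage_piece:
  assumes "k s \<in> carrier G" "W \<subseteq> carrier G"
    and stages: "(\<lambda>x. (st x, k (st x) \<otimes> x)) ` W = (SIGMA s:{..<p}. {y \<in> carrier G. cfg y \<in> Img s})"
    and "s < p" "C \<in> Img s"
  shows "ltrans G (k s) {x \<in> W. st x = s \<and> cfg (k s \<otimes> x) = C} = {y \<in> carrier G. cfg y = C}"
proof
  show "ltrans G (k s) {x \<in> W. st x = s \<and> cfg (k s \<otimes> x) = C} \<subseteq> {y \<in> carrier G. cfg y = C}"
    using assms(1,2) unfolding ltrans_def by auto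
  show "{y \<in> carrier G. cfg y = C} \<subseteq> ltrans G (k s) {x \<in> W. st x = s \<and> cfg (k s \<otimes> x) = C}"
  proof
    fix y assume y: "y \<in> {y \<in> carrier G. cfg y = C}"
    then have "(s, y) \<in> (\<lambda>x. (st x, k (st x) \<otimes> x)) ` W"
      using stages assms(4,5) by auto
    then obtain x where "x \<in> W" "st x = s" "k s \<otimes> x = y"
      by auto
    then show "y \<in> ltrans G (k s) {x \<in> W. st x = s \<and> cfg (k s \<otimes> x) = C}"
      using y unfolding ltrans_def by auto
  qed
qed

lemma indexed_partition_stage_pieces:
  assumes k: "\<forall>s<p. k s \<in> carrier G" and W: "W \<subseteq> carrier G" and onto: "cfg ` carrier G = Con"
    and stages: "(\<lambda>x. (st x, k (st x) \<otimes> x)) ` W = (SIGMA s:{..<p}. {y \<in> carrier G. cfg y \<in> Img s})"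
  shows "indexed_partition (\<lambda>(C, s). {x \<in> W. st x = s \<and> cfg (k s \<otimes> x) = C})
    (SIGMA C:Con. {s. s < p \<and> C \<in> Img s}) W"
  unfolding indexed_partition_def
proof (intro conjI)
  show "\<forall>z\<in>(SIGMA C:Con. {s. s < p \<and> C \<in> Img s}). (\<lambda>(C, s). {x \<in> W. st x = s \<and> cfg (k s \<otimes> x) = C}) z \<noteq> {}"
  proof clarify
    fix C s assume "C \<in> Con" "s < p" "C \<in> Img s" "{x \<in> W. st x = s \<and> cfg (k s \<otimes> x) = C} = {}"
    then show False
      using ltrans_stage_piece[OF _ W stages] k onto unfolding ltrans_def by force
  qed
  show "disjoint_family_on (\<lambda>(C, s). {x \<in> W. st x = s \<and> cfg (k s \<otimes> x) = C})
      (SIGMA C:Con. {s. s < p \<and> C \<in> Img s})"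
    unfolding disjoint_family_on_def by auto
  show "(\<Union>z\<in>(SIGMA C:Con. {s. s < p \<and> C \<in> Img s}). (\<lambda>(C, s). {x \<in> W. st x = s \<and> cfg (k s \<otimes> x) = C}) z) = W"
  proof (intro equalityI subsetI)
    fix x assume x: "x \<in> W"
    then have "st x < p" "k (st x) \<otimes> x \<in> carrier G" "cfg (k (st x) \<otimes> x) \<in> Img (st x)"
      using stages by blast+
    then show "x \<in> (\<Union>z\<in>(SIGMA C:Con. {s. s < p \<and> C \<in> Img s}). (\<lambda>(C, s). {x \<in> W. st x = s \<and> cfg (k s \<otimes> x) = C}) z)"
      using x onto by (intro UN_I[of "(cfg (k (st x) \<otimes> x), st x)"]) auto
  qed auto
qed

lemma tarski_number_le_stages:
  fixes cfg :: "'a \<Rightarrow> 'c" and p :: nat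
  assumes fin: "finite Con" and onto: "cfg ` carrier G = Con" and A0: "A0 \<subseteq> Con"
    and k: "\<forall>s<p. k s \<in> carrier G"
    and stages: "(\<lambda>x. (st x, k (st x) \<otimes> x)) ` {x \<in> carrier G. cfg x \<in> A0}
      = (SIGMA s:{..<p}. {y \<in> carrier G. cfg y \<in> Img s})"
    and count: "\<forall>C\<in>Con. card {s. s < p \<and> C \<in> Img s} = (if C \<in> A0 then 2 else 1)"
  shows "tarski_number G \<le> enat (1 + card A0 + card Con)"
proof -
  define W where "W = {x \<in> carrier G. cfg x \<in> A0}"
  define X where "X C = {y \<in> carrier G. cfg y = C}" for C
  define S where "S C = {s. s < p \<and> C \<in> Img s}" for C
  define P where "P = (\<lambda>(C, s). {x \<in> W. st x = s \<and> cfg (k s \<otimes> x) = C})"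
  \<comment> \<open>A fibre is reached at one stage, or at two if it lies in \<open>W\<close>; the first stage supplies the
    piece for the first family of translates, the last stage the piece for the second.\<close>
  define g where "g = case_sum (\<lambda>C. (C, Min (S C))) (\<lambda>C. (C, Max (S C)))"
  have W: "W \<subseteq> carrier G"
    unfolding W_def by blast
  have g: "bij_betw g (Con <+> A0) (SIGMA C:Con. S C)"
    using bij_betw_Min_Max[OF A0, of S] count unfolding g_def S_def by blast
  have translate: "ltrans G (k s) (P (C, s)) = X C" if "C \<in> Con" "s \<in> S C" for C s
    using ltrans_stage_piece[OF _ W stages[folded W_def]] k that unfolding P_def X_def S_def by auto
  have "indexed_partition (P \<circ> g) (Con <+> A0) W"
    using indexed_partition_stage_pieces[OF k W onto stages[folded W_def]] g
    unfolding P_def S_def by (rule indexed_partition_reindex)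
  moreover have "P \<circ> g = case_sum (\<lambda>C. P (g (Inl C))) (\<lambda>C. P (g (Inr C)))"
    by (auto simp: fun_eq_iff split: sum.split)
  ultimately have pieces: "indexed_partition (case_sum (\<lambda>C. P (g (Inl C))) (\<lambda>C. P (g (Inr C)))) (Con <+> A0) W"
    by simp
  have g_in: "g z \<in> (SIGMA C:Con. S C)" if "z \<in> Con <+> A0" for z
    using g that by (auto dest: bij_betwE)
  have "indexed_partition X Con (carrier G)"
    using indexed_partition_fibres[where f = cfg and T = "carrier G"] onto unfolding X_def by simp
  then have translates_Inl: "indexed_partition (\<lambda>C. ltrans G (k (Min (S C))) (P (g (Inl C)))) Con (carrier G)"
    by (rule iffD2[OF indexed_partition_cong, rotated])
      (use translate g_in[OF InlI] in \<open>auto simp: g_def\<close>)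
  have "cfg ` W = A0"
    using A0 onto unfolding W_def by auto
  then have "indexed_partition (\<lambda>C. {x \<in> W. cfg x = C}) A0 W"
    using indexed_partition_fibres[where f = cfg and T = W] by simp
  then have "indexed_partition X A0 W"
    by (rule iffD2[OF indexed_partition_cong, rotated]) (auto simp: X_def W_def)
  then have translates_Inr: "indexed_partition (\<lambda>C. ltrans G (k (Max (S C))) (P (g (Inr C)))) A0 W"
    by (rule iffD2[OF indexed_partition_cong, rotated])
      (use translate g_in[OF InrI] A0 in \<open>auto simp: g_def\<close>)
  have "tarski_number G \<le> enat (card Con + card A0 + 1)"
  proof (rule tarski_number_le_doubling[OF _ _ _ _ W pieces translates_Inl translates_Inr])
    show "finite Con" "finite A0"
      using fin A0 finite_subset by auto
    show "(\<lambda>C. k (Min (S C))) ` Con \<subseteq> carrier G" "(\<lambda>C. k (Max (S C))) ` A0 \<subseteq> carrier G"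
      using g_in[OF InlI] g_in[OF InrI] k unfolding g_def S_def by auto
  qed
  then show ?thesis
    by (simp add: add.commute)
qed

end

primrec chain_prod :: "('a, 'b) monoid_scheme \<Rightarrow> (nat \<Rightarrow> 'a) \<Rightarrow> nat \<Rightarrow> 'a" where
  "chain_prod G h 0 = h 0"
| "chain_prod G h (Suc s) = h (Suc s) \<otimes>\<^bsub>G\<^esub> chain_prod G h s"

definition exit_stage :: "('a, 'b) monoid_scheme \<Rightarrow> (nat \<Rightarrow> 'a) \<Rightarrow> (nat \<Rightarrow> 'a set) \<Rightarrow> 'a \<Rightarrow> nat" where
  "exit_stage G h U x = (LEAST s. chain_prod G h s \<otimes>\<^bsub>G\<^esub> x \<notin> U (Suc s))"

lemma exit_stage_eqI:
  assumes "\<forall>r<s. chain_prod G h r \<otimes>\<^bsub>G\<^esub> x \<in> U (Suc r)" "chain_prod G h s \<otimes>\<^bsub>G\<^esub> x \<notin> U (Suc s)"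
  shows "exit_stage G h U x = s"
  unfolding exit_stage_def using assms by (intro Least_equality) (auto simp: not_less[symmetric])

lemma exit_stage_bounded:
  assumes "chain_prod G h q \<otimes>\<^bsub>G\<^esub> x \<notin> U (Suc q)"
  shows "exit_stage G h U x \<le> q"
    and "\<forall>r<exit_stage G h U x. chain_prod G h r \<otimes>\<^bsub>G\<^esub> x \<in> U (Suc r)"
    and "chain_prod G h (exit_stage G h U x) \<otimes>\<^bsub>G\<^esub> x \<notin> U (Suc (exit_stage G h U x))"
proof -
  show "exit_stage G h U x \<le> q"
    unfolding exit_stage_def using assms by (rule Least_le)
  show "\<forall>r<exit_stage G h U x. chain_prod G h r \<otimes>\<^bsub>G\<^esub> x \<in> U (Suc r)"
    unfolding exit_stage_def using not_less_Least by blast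
  show "chain_prod G h (exit_stage G h U x) \<otimes>\<^bsub>G\<^esub> x \<notin> U (Suc (exit_stage G h U x))"
    unfolding exit_stage_def using assms by (rule LeastI)
qed

lemma (in monoid) chain_prod_closed: "(\<And>r. r \<le> s \<Longrightarrow> h r \<in> carrier G) \<Longrightarrow> chain_prod G h s \<in> carrier G"
  by (induction s) auto

locale translation_chain = group +
  fixes p :: nat and h :: "nat \<Rightarrow> 'a" and U V :: "nat \<Rightarrow> 'a set"
  assumes h_closed: "\<And>s. s < p \<Longrightarrow> h s \<in> carrier G"
    and U0_closed: "U 0 \<subseteq> carrier G" and V_closed: "\<And>s. s < p \<Longrightarrow> V s \<subseteq> carrier G"
    and translate: "\<And>s x. s < p \<Longrightarrow> x \<in> carrier G \<Longrightarrow> x \<in> U s \<longleftrightarrow> h s \<otimes> x \<in> V s"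
    and nested: "\<And>s. Suc s < p \<Longrightarrow> U (Suc s) \<subseteq> V s"
    and last: "U p = {}"
begin

lemma chain_prod_closed_below: "s < p \<Longrightarrow> chain_prod G h s \<in> carrier G"
  by (rule chain_prod_closed) (simp add: h_closed)

lemma chain_forward:
  assumes "s < p" "x \<in> U 0" "\<forall>r<s. chain_prod G h r \<otimes> x \<in> U (Suc r)"
  shows "chain_prod G h s \<otimes> x \<in> V s"
  using assms
proof (induction s)
  case 0
  then show ?case
    using translate U0_closed by auto
next
  case (Suc s)
  have "chain_prod G h s \<otimes> x \<in> U (Suc s)" "chain_prod G h s \<in> carrier G" "x \<in> carrier G"
    using Suc.prems chain_prod_closed_below[of s] U0_closed by auto
  then have "h (Suc s) \<otimes> (chain_prod G h s \<otimes> x) \<in> V (Suc s)"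
    using translate Suc.prems(1) by simp
  then show ?case
    using h_closed Suc.prems(1) \<open>chain_prod G h s \<in> carrier G\<close> \<open>x \<in> carrier G\<close>
    by (simp add: m_assoc)
qed

lemma chain_backward:
  assumes "s < p" "y \<in> V s"
  shows "\<exists>x\<in>U 0. (\<forall>r<s. chain_prod G h r \<otimes> x \<in> U (Suc r)) \<and> chain_prod G h s \<otimes> x = y"
  using assms
proof (induction s arbitrary: y)
  case (Suc s)
  define z where "z = inv (h (Suc s)) \<otimes> y"
  have "h (Suc s) \<in> carrier G" "y \<in> carrier G"
    using h_closed V_closed Suc.prems by auto
  then have z: "z \<in> U (Suc s)" "h (Suc s) \<otimes> z = y"
    using translate Suc.prems unfolding z_def by (auto simp: m_assoc[symmetric])
  then obtain x where "x \<in> U 0" "\<forall>r<s. chain_prod G h r \<otimes> x \<in> U (Suc r)" "chain_prod G h s \<otimes> x = z"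
    using Suc nested by auto
  then show ?case
    using z U0_closed chain_prod_closed_below[of s] h_closed Suc.prems
    by (intro bexI[of _ x]) (auto simp: less_Suc_eq m_assoc)
next
  case 0
  have "h 0 \<in> carrier G" "y \<in> carrier G"
    using h_closed V_closed 0 by auto
  then show ?case
    using translate 0 by (intro bexI[of _ "inv (h 0) \<otimes> y"]) (auto simp: m_assoc[symmetric])
qed

lemma chain_stages:
  "(\<lambda>x. (exit_stage G h U x, chain_prod G h (exit_stage G h U x) \<otimes> x)) ` U 0
    = (SIGMA s:{..<p}. V s - U (Suc s))"
proof
  show "(\<lambda>x. (exit_stage G h U x, chain_prod G h (exit_stage G h U x) \<otimes> x)) ` U 0
    \<subseteq> (SIGMA s:{..<p}. V s - U (Suc s))"
  proof (rule image_subsetI)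
    fix x assume x: "x \<in> U 0"
    then have "0 < p"
      using last by (cases p) auto
    then have "chain_prod G h (p - 1) \<otimes> x \<notin> U (Suc (p - 1))"
      using last by simp
    then show "(exit_stage G h U x, chain_prod G h (exit_stage G h U x) \<otimes> x)
        \<in> (SIGMA s:{..<p}. V s - U (Suc s))"
      using exit_stage_bounded[of G h "p - 1" x U] chain_forward[OF _ x] \<open>0 < p\<close> by auto
  qed
  show "(SIGMA s:{..<p}. V s - U (Suc s))
    \<subseteq> (\<lambda>x. (exit_stage G h U x, chain_prod G h (exit_stage G h U x) \<otimes> x)) ` U 0"
  proof clarify
    fix s y assume "s < p" "y \<in> V s" "y \<notin> U (Suc s)"
    moreover obtain x where "x \<in> U 0" "\<forall>r<s. chain_prod G h r \<otimes> x \<in> U (Suc r)"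
      "chain_prod G h s \<otimes> x = y"
      using chain_backward \<open>s < p\<close> \<open>y \<in> V s\<close> by blast
    ultimately show "(s, y) \<in> (\<lambda>x. (exit_stage G h U x, chain_prod G h (exit_stage G h U x) \<otimes> x)) ` U 0"
      using exit_stage_eqI[of s G h x U] by force
  qed
qed

end

lemma card_eq_sum_ind:
  fixes p :: nat
  shows "int (card {s. s < p \<and> C \<in> Y s}) = (\<Sum>s<p. ind (Y s) C)"
proof -
  have "{s. s < p \<and> C \<in> Y s} = {s \<in> {..<p}. C \<in> Y s}"
    by auto
  then have "int (card {s. s < p \<and> C \<in> Y s}) = (\<Sum>s\<in>{s \<in> {..<p}. C \<in> Y s}. 1)"
    by simp
  also have "\<dots> = (\<Sum>s<p. ind (Y s) C)"
    by (subst sum.inter_filter) (auto simp: ind_def)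
  finally show ?thesis .
qed

lemma sum_ind_telescope:
  assumes "\<forall>s<p. A (Suc s) \<subseteq> B s" "A p = {}"
  shows "(\<Sum>s<p. ind (B s - A (Suc s)) C) = (\<Sum>s<p. ind (B s) C - ind (A s) C) + ind (A 0) C"
proof -
  have "(\<Sum>s<p. ind (B s - A (Suc s)) C) = (\<Sum>s<p. (ind (B s) C - ind (A s) C) - (ind (A (Suc s)) C - ind (A s) C))"
    using assms(1) by (intro sum.cong) (auto simp: ind_def)
  also have "\<dots> = (\<Sum>s<p. ind (B s) C - ind (A s) C) - (ind (A p) C - ind (A 0) C)"
    using sum_lessThan_telescope[of "\<lambda>s. ind (A s) C" p] by (simp add: sum_subtractf)
  finally show ?thesis
    using assms(2) by (simp add: ind_def)
qed

lemma (in group) tarski_number_le_translation_chain: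
  fixes cfg :: "'a \<Rightarrow> nat list" and A B :: "nat \<Rightarrow> nat list set"
  assumes fin: "finite Con" and onto: "cfg ` carrier G = Con" and A_sub: "\<forall>t<p. A t \<subseteq> Con"
    and translate: "\<forall>t<p. \<exists>h\<in>carrier G. \<forall>x\<in>carrier G. cfg x \<in> A t \<longleftrightarrow> cfg (h \<otimes> x) \<in> B t"
    and nested: "\<forall>s. Suc s < p \<longrightarrow> A (Suc s) \<subseteq> B s"
    and balance: "\<forall>C\<in>Con. (\<Sum>t<p. ind (B t) C - ind (A t) C) = 1"
  shows "tarski_number G \<le> enat (1 + card (A 0) + card Con)"
proof -
  have "0 < p"
    using balance onto by (cases p) auto
  obtain h where h: "\<forall>t<p. h t \<in> carrier G \<and> (\<forall>x\<in>carrier G. cfg x \<in> A t \<longleftrightarrow> cfg (h t \<otimes> x) \<in> B t)"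
    using translate by metis
  \<comment> \<open>Padding with empty sets beyond \<open>p\<close> makes every chain of translations stop before stage \<open>p\<close>.\<close>
  define A' where "A' s = (if s < p then A s else {})" for s
  define U where "U s = {x \<in> carrier G. cfg x \<in> A' s}" for s
  define V where "V s = {x \<in> carrier G. cfg x \<in> B s}" for s
  define Img where "Img s = B s - A' (Suc s)" for s
  have "(\<lambda>x. (exit_stage G h U x, chain_prod G h (exit_stage G h U x) \<otimes> x)) ` U 0
      = (SIGMA s:{..<p}. V s - U (Suc s))"
  proof (rule translation_chain.chain_stages, unfold_locales)
    show "\<And>s x. s < p \<Longrightarrow> x \<in> carrier G \<Longrightarrow> x \<in> U s \<longleftrightarrow> h s \<otimes> x \<in> V s"
      using h unfolding U_def V_def A'_def by auto
  qed (use h nested in \<open>auto simp: U_def V_def A'_def\<close>)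
  moreover have "U 0 = {x \<in> carrier G. cfg x \<in> A 0}"
    using \<open>0 < p\<close> unfolding U_def A'_def by simp
  moreover have "V s - U (Suc s) = {y \<in> carrier G. cfg y \<in> Img s}" for s
    unfolding U_def V_def Img_def by auto
  ultimately have stages:
    "(\<lambda>x. (exit_stage G h U x, chain_prod G h (exit_stage G h U x) \<otimes> x)) ` {x \<in> carrier G. cfg x \<in> A 0}
      = (SIGMA s:{..<p}. {y \<in> carrier G. cfg y \<in> Img s})"
    by simp
  have "card {s. s < p \<and> C \<in> Img s} = (if C \<in> A 0 then 2 else 1)" if "C \<in> Con" for C
  proof -
    have "(\<Sum>s<p. ind (A' s) C) = (\<Sum>t<p. ind (A t) C)"
      unfolding A'_def by simp
    then have "int (card {s. s < p \<and> C \<in> Img s}) = 1 + ind (A 0) C"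
      using sum_ind_telescope[of p A' B C] balance that nested \<open>0 < p\<close>
      unfolding card_eq_sum_ind Img_def by (auto simp: A'_def sum_subtractf)
    then show ?thesis
      by (auto simp: ind_def)
  qed
  moreover have "\<forall>s<p. chain_prod G h s \<in> carrier G"
    using h by (auto intro!: chain_prod_closed)
  moreover have "A 0 \<subseteq> Con"
    using A_sub \<open>0 < p\<close> by blast
  ultimately show ?thesis
    using tarski_number_le_stages[OF fin onto _ _ stages] by blast
qed

definition partition_index :: "'a set list \<Rightarrow> 'a \<Rightarrow> nat" where
  "partition_index Es y = (THE i. i < length Es \<and> y \<in> Es ! i)"

definition configuration_of :: "('a, 'b) monoid_scheme \<Rightarrow> 'a list \<Rightarrow> 'a set list \<Rightarrow> 'a \<Rightarrow> nat list" where
  "configuration_of G gs Es x = map (\<lambda>g. partition_index Es (g \<otimes>\<^bsub>G\<^esub> x)) (\<one>\<^bsub>G\<^esub> # gs)"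

lemma partition_index_eq:
  assumes "is_partition_list G Es" "i < length Es" "y \<in> Es ! i"
  shows "partition_index Es y = i"
  unfolding partition_index_def
proof (rule the_equality)
  show "\<And>j. j < length Es \<and> y \<in> Es ! j \<Longrightarrow> j = i"
    using assms unfolding is_partition_list_def by blast
qed (use assms in simp)

lemma partition_index:
  assumes "is_partition_list G Es" "y \<in> carrier G"
  shows "partition_index Es y < length Es" "y \<in> Es ! partition_index Es y"
proof -
  obtain i where "i < length Es" "y \<in> Es ! i"
    using assms unfolding is_partition_list_def by blast
  then show "partition_index Es y < length Es" "y \<in> Es ! partition_index Es y"
    using partition_index_eq[OF assms(1)] by auto
qed

lemma finite_configurations: "finite (configurations G gs Es)"
proof (rule finite_subset)
  show "configurations G gs Es \<subseteq> {C. set C \<subseteq> {..<length Es} \<and> length C = length gs + 1}"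
    unfolding configurations_def by (auto simp: in_set_conv_nth)
qed (rule finite_lists_length_eq, simp)

context monoid
begin

lemma nth_configuration_of:
  "j \<le> length gs \<Longrightarrow> configuration_of G gs Es x ! j = partition_index Es ((\<one> # gs) ! j \<otimes> x)"
  unfolding configuration_of_def by (simp add: nth_Cons')

lemma configurations_eq_image:
  assumes gs: "set gs \<subseteq> carrier G" and part: "is_partition_list G Es"
  shows "configurations G gs Es = configuration_of G gs Es ` carrier G"
proof
  show "configuration_of G gs Es ` carrier G \<subseteq> configurations G gs Es"
  proof (rule image_subsetI)
    fix x assume x: "x \<in> carrier G"
    let ?C = "configuration_of G gs Es x"
    have entry: "?C ! j < length Es" "(\<one> # gs) ! j \<otimes> x \<in> Es ! (?C ! j)" if "j \<le> length gs" for j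
    proof -
      have "(\<one> # gs) ! j \<otimes> x \<in> carrier G"
        using gs x that by (auto simp: nth_Cons' subset_code(1))
      then show "?C ! j < length Es" "(\<one> # gs) ! j \<otimes> x \<in> Es ! (?C ! j)"
        using partition_index[OF part] that by (simp_all add: nth_configuration_of)
    qed
    have "length ?C = length gs + 1"
      by (simp add: configuration_of_def)
    moreover have "x \<in> Es ! (?C ! 0)"
      using entry(2)[of 0] x by simp
    moreover have "\<forall>i<length gs. gs ! i \<otimes> x \<in> Es ! (?C ! (i + 1))"
      using entry(2)[of "Suc _"] by simp
    ultimately show "?C \<in> configurations G gs Es"
      using entry(1) x unfolding configurations_def by auto
  qed
  show "configurations G gs Es \<subseteq> configuration_of G gs Es ` carrier G"
  proof
    fix C assume "C \<in> configurations G gs Es"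
    then obtain x where C: "length C = length gs + 1" "\<forall>i < length C. C ! i < length Es"
      "x \<in> carrier G" "x \<in> Es ! (C ! 0)" "\<forall>i < length gs. gs ! i \<otimes> x \<in> Es ! (C ! (i + 1))"
      unfolding configurations_def by auto
    have "configuration_of G gs Es x ! j = C ! j" if "j < length gs + 1" for j
      using C that partition_index_eq[OF part]
      by (cases j) (auto simp: nth_configuration_of)
    then have "configuration_of G gs Es x = C"
      using C by (intro nth_equalityI) (auto simp: configuration_of_def)
    then show "C \<in> configuration_of G gs Es ` carrier G"
      using C by blast
  qed
qed

end

lemma (in group) config_equation_translation:
  assumes gs: "set gs \<subseteq> carrier G" and part: "is_partition_list G Es"
    and eq: "(E, E') \<in> config_equations G gs Es"
  shows "\<exists>h\<in>carrier G. \<forall>x\<in>carrier G.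
    configuration_of G gs Es x \<in> E \<longleftrightarrow> configuration_of G gs Es (h \<otimes> x) \<in> E'"
proof -
  let ?cfg = "configuration_of G gs Es"
  obtain i j k where "j \<le> length gs" "k \<le> length gs"
    and E: "E = {C \<in> configurations G gs Es. C ! j = i}" "E' = {C \<in> configurations G gs Es. C ! k = i}"
    using eq unfolding config_equations_def by blast
  define g g' where "g = (\<one> # gs) ! j" and "g' = (\<one> # gs) ! k"
  have g: "g \<in> carrier G" "g' \<in> carrier G"
    using gs \<open>j \<le> length gs\<close> \<open>k \<le> length gs\<close> unfolding g_def g'_def
    by (auto simp: nth_Cons' subset_code(1))
  have "?cfg (inv g' \<otimes> g \<otimes> x) ! k = ?cfg x ! j" if "x \<in> carrier G" for x
    using that g \<open>j \<le> length gs\<close> \<open>k \<le> length gs\<close>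
    by (simp add: nth_configuration_of m_assoc[symmetric] g_def[symmetric] g'_def[symmetric])
  then show ?thesis
    using g configurations_eq_image[OF gs part] unfolding E
    by (intro bexI[of _ "inv g' \<otimes> g"]) auto
qed

theorem theorem4p5:
  fixes G :: "('a, 'b) monoid_scheme"
    and gs :: "'a list" and Es :: "'a set list"
    and Eqs :: "(nat list set \<times> nat list set) list"
    and \<pi> :: "nat \<Rightarrow> nat"
  defines "Con \<equiv> configurations G gs Es"
      and "p \<equiv> length Eqs"
      and "A \<equiv> (\<lambda>t. fst (Eqs ! t))"
      and "B \<equiv> (\<lambda>t. snd (Eqs ! t))"
  assumes grp: "group G"
    and gs_in: "set gs \<subseteq> carrier G"
    and part: "is_partition_list G Es"
    and subsys: "set Eqs \<subseteq> config_equations G gs Es"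
    and sum_one: "\<forall>C \<in> Con. (\<Sum>t < p. ind (B t) C - ind (A t) C) = 1"
    and perm: "bij_betw \<pi> {..<p} {..<p}"
    and nonneg: "\<forall>i. i + 1 < p \<longrightarrow> (\<forall>C \<in> Con. ind (B (\<pi> i)) C - ind (A (\<pi> (i + 1))) C \<ge> 0)"
  shows "tarski_number G \<le> enat (1 + card (A (\<pi> 0)) + card Con)"
proof -
  interpret group G by (rule grp)
  have onto: "configuration_of G gs Es ` carrier G = Con"
    unfolding Con_def using configurations_eq_image[OF gs_in part] by simp
  have eqs: "(A (\<pi> t), B (\<pi> t)) \<in> config_equations G gs Es" if "t < p" for t
    using subsys bij_betwE[OF perm] that unfolding A_def B_def p_def by auto
  then have "\<forall>t<p. A (\<pi> t) \<subseteq> Con"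
    unfolding Con_def config_equations_def by blast
  moreover have "\<forall>t<p. \<exists>h\<in>carrier G. \<forall>x\<in>carrier G. configuration_of G gs Es x \<in> A (\<pi> t)
      \<longleftrightarrow> configuration_of G gs Es (h \<otimes>\<^bsub>G\<^esub> x) \<in> B (\<pi> t)"
    using config_equation_translation[OF gs_in part eqs] by blast
  moreover have "\<forall>s. Suc s < p \<longrightarrow> A (\<pi> (Suc s)) \<subseteq> B (\<pi> s)"
    using nonneg \<open>\<forall>t<p. A (\<pi> t) \<subseteq> Con\<close> unfolding ind_def by (fastforce split: if_splits)
  moreover have "\<forall>C\<in>Con. (\<Sum>t<p. ind (B (\<pi> t)) C - ind (A (\<pi> t)) C) = 1"
    using sum_one sum.reindex_bij_betw[OF perm, of "\<lambda>t. ind (B t) _ - ind (A t) _"] by simp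
  ultimately show ?thesis
    by (rule tarski_number_le_translation_chain[OF finite_configurations[of G gs Es, folded Con_def] onto])
qed

end
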